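(* Let $3\le l\le 9$ and let $k, r_1,\dots,r_l$ be integers with $r_1\le r_2\le\cdots\le r_l\le k$ and $2k+3\le r_1+r_2+r_3$. Then $$c(\mathbf r;k)=\binom{k+2}{2}-\sum_{i=1}^l\binom{k-r_i+2}{2}>0.$$
   Context: $c(\mathbf r;k)$ is the virtual dimension of the degree-$k$ part of $F[x,y,z]$ modulo the ideal generated by $p_i^{r_i}$ for $l$ points in $\mathbb P^2$; under the hypotheses all $r_i\le k$, so it is given by the displayed formula. *)

theory Defs
  imports Main
begin

text \<open>Virtual dimension c(r;k) of the degree-k part of F[x,y,z] modulo the ideal
generated by the powers p_i^{r_i}, for multiplicities r_1,...,r_l all at most k:
binom(k+2,2) - sum_i binom(k-r_i+2,2).\<close>
definition vdim :: "nat \<Rightarrow> (nat \<Rightarrow> nat) \<Rightarrow> nat \<Rightarrow> int" where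
  "vdim l r k = int ((k + 2) choose 2) - (\<Sum>i = 1..l. int ((k - r i + 2) choose 2))"

end

theory Submission
  imports Defs
begin

(* Write s_i = k - r_i and T n = (n + 2) choose 2. Then s_1 \<ge> s_2 \<ge> ... \<ge> s_l \<ge> 0, the
   hypothesis reads s_1 + s_2 + s_3 + 3 \<le> k, and, as l \<le> 9, the subtracted sum is at most
   T s_1 + T s_2 + 7 T s_3. Expanding T k \<ge> T (s_1 + s_2 + s_3 + 3) shows that T k exceeds this
   bound by at least (s_1 s_2 + s_1 s_3 + s_2 s_3 - 3 s_3^2) + 3 (s_1 + s_2 - 2 s_3) + 1 > 0. *)

lemma double_Suc_Suc_choose_two: "2 * ((n + 2) choose 2) = (n + 2) * (n + 1)"
proof -
  have "even ((n + 2) * (n + 1))" by simp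
  then show ?thesis by (simp add: choose_two)
qed

lemma choose_two_sum_less:
  fixes a b c k :: nat
  assumes "c \<le> b" "b \<le> a" and "a + b + c + 3 \<le> k"
  shows "((a + 2) choose 2) + ((b + 2) choose 2) + 7 * ((c + 2) choose 2) < (k + 2) choose 2"
proof -
  have "(a + b + c + 5) * (a + b + c + 4) \<le> (k + 2) * (k + 1)"
    using assms(3) by (intro mult_mono) auto
  moreover have "3 * (c * c) \<le> a * b + a * c + b * c"
    using assms(1,2) mult_mono[of c a c b] mult_le_mono1[of c a c] mult_le_mono1[of c b c]
    by linarith
  ultimately have "(a + 2) * (a + 1) + (b + 2) * (b + 1) + 7 * ((c + 2) * (c + 1))
      < (k + 2) * (k + 1)"
    using assms(1,2) by (simp add: algebra_simps)
  then have "2 * (((a + 2) choose 2) + ((b + 2) choose 2) + 7 * ((c + 2) choose 2))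
      < 2 * ((k + 2) choose 2)"
    by (simp only: distrib_left mult.left_commute[of 2 7] double_Suc_Suc_choose_two)
  then show ?thesis
    by simp
qed

lemma sum_le_first_three_plus_third:
  fixes f :: "nat \<Rightarrow> 'a::{ordered_comm_monoid_add, semiring_1}"
  assumes "3 \<le> l" and "\<And>i. i \<in> {4..l} \<Longrightarrow> f i \<le> f 3"
  shows "(\<Sum>i = 1..l. f i) \<le> f 1 + f 2 + f 3 + of_nat (l - 3) * f 3"
proof -
  have "{1..l} = {1, 2, 3} \<union> {4..l}" using assms(1) by auto
  then have "(\<Sum>i = 1..l. f i) = f 1 + f 2 + f 3 + (\<Sum>i = 4..l. f i)"
    by (simp add: sum.union_disjoint add.assoc)
  moreover have "(\<Sum>i = 4..l. f i) \<le> of_nat (l - 3) * f 3"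
    using sum_mono[of "{4..l}" f "\<lambda>_. f 3"] assms(2) by simp
  ultimately show ?thesis
    by (simp add: add_left_mono)
qed

theorem mainTheorem8:
  fixes l k :: nat and r :: "nat \<Rightarrow> nat"
  assumes "3 \<le> l" and "l \<le> 9"
    and "\<forall>i. 1 \<le> i \<and> i < l \<longrightarrow> r i \<le> r (i + 1)"
    and "r l \<le> k"
    and "2 * k + 3 \<le> r 1 + r 2 + r 3"
  shows "vdim l r k > 0"
proof -
  define f where "f i = (k - r i + 2) choose 2" for i
  have mono: "r i \<le> r j" if "1 \<le> i" "i \<le> j" "j \<le> l" for i j
    using lift_Suc_mono_le_ivl[of "{1..<l}" r i j] assms(3) that by auto
  have r123: "r 1 \<le> r 2" "r 2 \<le> r 3" "r 3 \<le> k"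
    using mono[of 1 2] mono[of 2 3] mono[of 3 l] assms(1,4) by auto
  have tail: "f i \<le> f 3" if "i \<in> {4..l}" for i
    unfolding f_def using mono[of 3 i] that by (intro binomial_right_mono) auto
  have "(\<Sum>i = 1..l. f i) \<le> f 1 + f 2 + f 3 + (l - 3) * f 3"
    using sum_le_first_three_plus_third[of l f, OF assms(1) tail] by simp
  also have "\<dots> \<le> f 1 + f 2 + 7 * f 3"
    using mult_le_mono1[of "l - 3" 6 "f 3"] assms(2) by auto
  also have "\<dots> < (k + 2) choose 2"
    unfolding f_def using r123 assms(5) by (intro choose_two_sum_less) auto
  finally show ?thesis
    unfolding vdim_def f_def by (simp flip: of_nat_sum)
qed

end
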